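(* Let $c_0,p_0$ be constants and let $(H_n)_{n\in\mathbb Z}$, $(G_n)_{n\in\mathbb Z}$ be sequences of differentiable functions of a real variable $\eta$ on a common interval, with $H_n>0$, satisfying for all $n$ \[ -c_0\,H_n+\frac{dH_n}{d\eta}=H_n\bigl(G_{n+1}-G_n\bigr),\qquad p_0-c_0\,G_n+\frac{dG_n}{d\eta}=2\bigl(H_n^2-H_{n-1}^2\bigr). \] Define $r_n(\eta)=2\log\bigl(2H_n(\eta)\bigr)$. Then for all $n$ \[ \frac{d^2 r_n}{d\eta^2}=c_0\Bigl(\frac{dr_n}{d\eta}-2c_0\Bigr)+\bigl(e^{r_{n+1}}-2e^{r_n}+e^{r_{n-1}}\bigr). \]
   Context: In the paper this is stated in the notation $H=H(\eta)$, $\overline H=H(\overline\eta)$, $\underline H=H(\underline\eta)$ along a chain of points $\eta=\nu(n)+\sigma(t)$, $\overline\eta=\nu(n+1)+\sigma(t)$; here $H_n$, $G_n$ denote $H$, $G$ evaluated at the $n$-th point of the chain, viewed as functions of the common shift parameter, and overline/underline correspond to $n\pm1$. *)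

theory Defs
  imports "HOL-Analysis.Analysis"
begin

definition rfun :: "(int \<Rightarrow> real \<Rightarrow> real) \<Rightarrow> int \<Rightarrow> real \<Rightarrow> real" where
  "rfun H n \<eta> = 2 * ln (2 * H n \<eta>)"

end

theory Submission
  imports Defs
begin

text \<open>Since \<open>e^{r_n} = 4 H_n^2\<close>, the equation for \<open>H_n\<close> says that \<open>r_n' = 2 c_0 + 2 (G_{n+1} - G_n)\<close>.
  Differentiating once more and substituting the equation for \<open>G_n\<close> turns
  \<open>G_{n+1}' - G_n'\<close> into \<open>c_0 (G_{n+1} - G_n) + 2 (H_{n+1}^2 - 2 H_n^2 + H_{n-1}^2)\<close>,
  which is the Toda-type lattice equation for \<open>r_n\<close>.\<close>

lemma exp_rfun:
  fixes H :: "int \<Rightarrow> real \<Rightarrow> real"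
  assumes "H n x > 0"
  shows "exp (rfun H n x) = 4 * (H n x)\<^sup>2"
proof -
  have "rfun H n x = ln ((2 * H n x) ^ 2)"
    unfolding rfun_def using assms ln_realpow[of "2 * H n x" 2] by simp
  then show ?thesis
    using assms by (simp add: power_mult_distrib)
qed

lemma rfun_has_real_derivative:
  fixes H :: "int \<Rightarrow> real \<Rightarrow> real"
  assumes "H n differentiable (at x)" and "H n x > 0"
  shows "(rfun H n has_real_derivative 2 * deriv (H n) x / H n x) (at x)"
proof -
  have "(H n has_real_derivative deriv (H n) x) (at x)"
    using assms(1) DERIV_deriv_iff_real_differentiable by blast
  then have "((\<lambda>t. 2 * ln (2 * H n t)) has_real_derivative 2 * deriv (H n) x / H n x) (at x)"
    using assms(2) by (auto intro!: derivative_eq_intros simp: field_simps)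
  then show ?thesis
    by (simp add: rfun_def [abs_def])
qed

lemma deriv_rfun_eq:
  fixes H G :: "int \<Rightarrow> real \<Rightarrow> real"
  assumes "H n differentiable (at x)" and "H n x > 0"
    and "- c0 * H n x + deriv (H n) x = H n x * (G (n + 1) x - G n x)"
  shows "deriv (rfun H n) x = 2 * c0 + 2 * (G (n + 1) x - G n x)"
proof -
  have "deriv (rfun H n) x = 2 * deriv (H n) x / H n x"
    using DERIV_imp_deriv[OF rfun_has_real_derivative[of H n x, OF assms(1,2)]] .
  also have "deriv (H n) x = H n x * (c0 + (G (n + 1) x - G n x))"
    using assms(3) by (simp add: algebra_simps)
  finally show ?thesis
    using assms(2) by simp
qed

theorem mainTheorem2:
  fixes c0 p0 :: real
    and H G :: "int \<Rightarrow> real \<Rightarrow> real"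
    and I :: "real set"
  assumes I_open: "open I" and I_int: "is_interval I"
    and H_diff: "\<And>n x. x \<in> I \<Longrightarrow> H n differentiable (at x)"
    and G_diff: "\<And>n x. x \<in> I \<Longrightarrow> G n differentiable (at x)"
    and H_pos: "\<And>n x. x \<in> I \<Longrightarrow> H n x > 0"
    and eqH: "\<And>n x. x \<in> I \<Longrightarrow>
       - c0 * H n x + deriv (H n) x = H n x * (G (n + 1) x - G n x)"
    and eqG: "\<And>n x. x \<in> I \<Longrightarrow>
       p0 - c0 * G n x + deriv (G n) x = 2 * ((H n x)\<^sup>2 - (H (n - 1) x)\<^sup>2)"
  shows "\<forall>n. \<forall>x\<in>I.
     (rfun H n has_real_derivative deriv (rfun H n) x) (at x) \<and>
     (deriv (rfun H n) has_real_derivative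
        (c0 * (deriv (rfun H n) x - 2 * c0)
         + (exp (rfun H (n + 1) x) - 2 * exp (rfun H n x) + exp (rfun H (n - 1) x)))) (at x)"
proof (intro allI ballI conjI)
  fix n x assume x: "x \<in> I"
  have deriv_r: "deriv (rfun H n) y = 2 * c0 + 2 * (G (n + 1) y - G n y)" if "y \<in> I" for y
    using deriv_rfun_eq[of H n y c0 G] H_diff H_pos eqH that by blast
  show "(rfun H n has_real_derivative deriv (rfun H n) x) (at x)"
    using rfun_has_real_derivative[of H n x, OF H_diff[OF x] H_pos[OF x]] DERIV_imp_deriv by metis
  have "(G m has_real_derivative deriv (G m) x) (at x)" for m
    using G_diff[OF x] DERIV_deriv_iff_real_differentiable by blast
  then have "((\<lambda>y. 2 * c0 + 2 * (G (n + 1) y - G n y)) has_real_derivative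
      2 * (deriv (G (n + 1)) x - deriv (G n) x)) (at x)"
    by (auto intro!: derivative_eq_intros)
  then have "(deriv (rfun H n) has_real_derivative
      2 * (deriv (G (n + 1)) x - deriv (G n) x)) (at x)"
    by (rule has_field_derivative_transform_within_open[OF _ I_open x]) (simp add: deriv_r)
  moreover have "2 * (deriv (G (n + 1)) x - deriv (G n) x) =
      c0 * (deriv (rfun H n) x - 2 * c0)
      + (exp (rfun H (n + 1) x) - 2 * exp (rfun H n x) + exp (rfun H (n - 1) x))"
    unfolding deriv_r[OF x] exp_rfun[of H _ x, OF H_pos[OF x]]
    using eqG[OF x, of n] eqG[OF x, of "n + 1"] by (simp add: algebra_simps)
  ultimately show "(deriv (rfun H n) has_real_derivative
      c0 * (deriv (rfun H n) x - 2 * c0)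
      + (exp (rfun H (n + 1) x) - 2 * exp (rfun H n x) + exp (rfun H (n - 1) x))) (at x)"
    by simp
qed

end
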